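(* Let $\overline{C}(\alpha,N)$ and $\overline{C}(\alpha)$ be as defined in the context. Then: (1) For real $0\le\alpha\le2$, $\overline{C}(\alpha,1)=0$ and $\overline{C}(\alpha,2)=1$. (2) For real $0\le\alpha\le2$ and positive integers $N$, $\overline{C}(\alpha,N)\le\overline{C}(\alpha,N+1)$. (3) For real $0\le\alpha\le2$ and positive integers $N$, $0\le\overline{C}(\alpha,N)\le N-1$. (4) For real $0\le\alpha\le2$, $\overline{C}(\alpha)=\lim_{N\to\infty}\overline{C}(\alpha,N)$.
   Context: For a strictly increasing sequence $(\lambda_k)_{k=-\infty}^{\infty}$ of real numbers, put $\delta_k:=\min\{\lambda_k-\lambda_{k-1},\lambda_{k+1}-\lambda_k\}$. For $0\le\alpha\le2$ and a positive integer $N$, let $\overline{C}(\alpha,N)$ be the minimum of all constants $C(\alpha,N)$ such that $$\sum_{m=1}^N\sum_{\substack{n=1\\ n\ne m}}^N\frac{\delta_m^{2-\alpha}\delta_n^{\alpha}t_mt_n}{(\lambda_m-\lambda_n)^2}\le C(\alpha,N)\sum_{n=1}^N t_n^2$$ holds for every strictly increasing real sequence $(\lambda_k)_{k\in\mathbb Z}$ and all nonnegative reals $t_1,\dots,t_N$. Let $\overline{C}(\alpha)$ be the minimum of all constants $C(\alpha)$ for which the same inequality (with $C(\alpha)$ in place of $C(\alpha,N)$) holds for every positive integer $N$, every such sequence and all nonnegative $t_1,\dots,t_N$; set $\overline{C}(\alpha)=\infty$ if no such real constant exists. *)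

theory Defs
  imports "HOL-Analysis.Analysis"
begin

definition gap :: "(int \<Rightarrow> real) \<Rightarrow> int \<Rightarrow> real" where
  "gap lam k = min (lam k - lam (k - 1)) (lam (k + 1) - lam k)"

definition hilbert_lhs :: "real \<Rightarrow> nat \<Rightarrow> (int \<Rightarrow> real) \<Rightarrow> (nat \<Rightarrow> real) \<Rightarrow> real" where
  "hilbert_lhs \<alpha> N lam t =
     (\<Sum>m\<in>{1..N}. \<Sum>n\<in>{1..N} - {m}.
        gap lam (int m) powr (2 - \<alpha>) * gap lam (int n) powr \<alpha> * t m * t n
        / (lam (int m) - lam (int n))^2)"

definition admissible_const :: "real \<Rightarrow> nat \<Rightarrow> real \<Rightarrow> bool" where
  "admissible_const \<alpha> N C \<longleftrightarrow>
     (\<forall>lam :: int \<Rightarrow> real. strict_mono lam \<longrightarrow>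
       (\<forall>t :: nat \<Rightarrow> real. (\<forall>n\<in>{1..N}. 0 \<le> t n) \<longrightarrow>
          hilbert_lhs \<alpha> N lam t \<le> C * (\<Sum>n\<in>{1..N}. (t n)^2)))"

definition Cbar :: "real \<Rightarrow> nat \<Rightarrow> real" where
  "Cbar \<alpha> N = Inf {C. admissible_const \<alpha> N C}"

text \<open>The uniform constant, extended-real valued; equal to infinity if no real constant works.\<close>
definition Cbar_inf :: "real \<Rightarrow> ereal" where
  "Cbar_inf \<alpha> = Inf (ereal ` {C. \<forall>N\<ge>1. admissible_const \<alpha> N C})"

end

theory Submission
  imports Defs
begin

text \<open>Since every gap is at most the distance between the two points involved, each
  coefficient of the form is at most 1, so the form is dominated by the off-diagonal sum
  \<open>\<Sum>\<^sub>m\<^sub>\<noteq>\<^sub>n t\<^sub>m t\<^sub>n \<le> (N - 1) \<Sum> t\<^sub>n\<^sup>2\<close>. For \<open>N = 2\<close> and equally spaced points the two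
  coefficients equal 1, so the bound \<open>N - 1\<close> is attained. Padding \<open>t\<close> with a zero
  restricts the inequality for \<open>N + 1\<close> to the one for \<open>N\<close>, which gives monotonicity in \<open>N\<close>;
  and since each \<open>Cbar \<alpha> N\<close> is itself admissible, a constant works for all \<open>N\<close> exactly
  when it dominates every \<open>Cbar \<alpha> N\<close>, so the uniform constant is the supremum, hence the
  limit, of the increasing sequence.\<close>

lemma gap_pos:
  assumes "strict_mono lam"
  shows "0 < gap lam k"
  using strict_monoD[OF assms, of "k - 1" k] strict_monoD[OF assms, of k "k + 1"]
  by (simp add: gap_def)

lemma gap_le_dist:
  assumes lam: "strict_mono (lam :: int \<Rightarrow> real)" and "m \<noteq> n"
  shows "gap lam m \<le> \<bar>lam m - lam n\<bar>"
proof (cases "m < n")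
  case True
  then have "lam (m + 1) \<le> lam n" "lam m < lam n"
    using lam by (simp_all add: strict_mono_less_eq strict_mono_less)
  then show ?thesis by (simp add: gap_def)
next
  case False
  with \<open>m \<noteq> n\<close> have "n \<le> m - 1" "n < m" by simp_all
  then have "lam n \<le> lam (m - 1)" "lam n < lam m"
    using lam by (simp_all add: strict_mono_less_eq strict_mono_less)
  then show ?thesis by (simp add: gap_def)
qed

lemma gap_powr_mult_le_sq:
  assumes lam: "strict_mono (lam :: int \<Rightarrow> real)" and "m \<noteq> n" and "0 \<le> \<alpha>" "\<alpha> \<le> 2"
  shows "gap lam m powr (2 - \<alpha>) * gap lam n powr \<alpha> \<le> (lam m - lam n)\<^sup>2"
proof -
  define d where "d = \<bar>lam m - lam n\<bar>"
  have "lam m \<noteq> lam n" using lam \<open>m \<noteq> n\<close> by (metis strict_mono_eq)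
  then have "0 < d" by (simp add: d_def)
  have "gap lam m \<le> d" using gap_le_dist[OF lam \<open>m \<noteq> n\<close>] by (simp add: d_def)
  then have "gap lam m powr (2 - \<alpha>) \<le> d powr (2 - \<alpha>)"
    using gap_pos[OF lam] \<open>\<alpha> \<le> 2\<close> by (simp add: powr_mono2 less_imp_le)
  moreover have "gap lam n \<le> d"
    using gap_le_dist[OF lam, of n m] \<open>m \<noteq> n\<close> by (simp add: d_def abs_minus_commute)
  then have "gap lam n powr \<alpha> \<le> d powr \<alpha>"
    using gap_pos[OF lam] \<open>0 \<le> \<alpha>\<close> by (simp add: powr_mono2 less_imp_le)
  ultimately have "gap lam m powr (2 - \<alpha>) * gap lam n powr \<alpha> \<le> d powr (2 - \<alpha>) * d powr \<alpha>"
    by (simp add: mult_mono)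
  also have "\<dots> = d\<^sup>2" using \<open>0 < d\<close> by (simp add: powr_add[symmetric])
  finally show ?thesis by (simp add: d_def)
qed

lemma sum_off_diagonal_mult_le:
  fixes t :: "'a \<Rightarrow> real"
  assumes "finite S"
  shows "(\<Sum>m\<in>S. \<Sum>n\<in>S - {m}. t m * t n) \<le> (real (card S) - 1) * (\<Sum>n\<in>S. (t n)\<^sup>2)"
proof -
  have "(\<Sum>m\<in>S. \<Sum>n\<in>S - {m}. t m * t n) \<le> (\<Sum>m\<in>S. \<Sum>n\<in>S - {m}. ((t m)\<^sup>2 + (t n)\<^sup>2) / 2)"
    using sum_squares_bound by (intro sum_mono) (simp add: field_simps)
  also have "\<dots> = (\<Sum>m\<in>S. (real (card S) - 1) * (t m)\<^sup>2 / 2 + ((\<Sum>n\<in>S. (t n)\<^sup>2) - (t m)\<^sup>2) / 2)"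
  proof (rule sum.cong[OF refl])
    fix m assume "m \<in> S"
    then have "real (card (S - {m})) = real (card S) - 1"
      using assms card_gt_0_iff[of S] by (auto simp: of_nat_diff)
    then show "(\<Sum>n\<in>S - {m}. ((t m)\<^sup>2 + (t n)\<^sup>2) / 2)
        = (real (card S) - 1) * (t m)\<^sup>2 / 2 + ((\<Sum>n\<in>S. (t n)\<^sup>2) - (t m)\<^sup>2) / 2"
      using \<open>m \<in> S\<close> assms
      by (simp add: sum.distrib add_divide_distrib sum_divide_distrib[symmetric] sum_diff1)
  qed
  also have "\<dots> = (real (card S) - 1) * (\<Sum>n\<in>S. (t n)\<^sup>2)"
    by (simp add: sum.distrib sum_divide_distrib[symmetric] sum_subtractf
        sum_distrib_left[symmetric] field_simps)
  finally show ?thesis .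
qed

lemma hilbert_lhs_le_card:
  assumes lam: "strict_mono lam" and t: "\<forall>n\<in>{1..N}. 0 \<le> t n" and "0 \<le> \<alpha>" "\<alpha> \<le> 2"
  shows "hilbert_lhs \<alpha> N lam t \<le> (real N - 1) * (\<Sum>n\<in>{1..N}. (t n)\<^sup>2)"
proof -
  have "hilbert_lhs \<alpha> N lam t \<le> (\<Sum>m\<in>{1..N}. \<Sum>n\<in>{1..N} - {m}. t m * t n)"
    unfolding hilbert_lhs_def
  proof (intro sum_mono)
    fix m n assume m: "m \<in> {1..N}" and n: "n \<in> {1..N} - {m}"
    then have "int m \<noteq> int n" by auto
    from gap_powr_mult_le_sq[OF lam this \<open>0 \<le> \<alpha>\<close> \<open>\<alpha> \<le> 2\<close>]
    have "gap lam (int m) powr (2 - \<alpha>) * gap lam (int n) powr \<alpha> * (t m * t n)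
        \<le> (lam (int m) - lam (int n))\<^sup>2 * (t m * t n)"
      using m n t by (intro mult_right_mono) auto
    moreover have "0 < (lam (int m) - lam (int n))\<^sup>2"
      using \<open>int m \<noteq> int n\<close> lam by (simp add: strict_mono_eq)
    ultimately show "gap lam (int m) powr (2 - \<alpha>) * gap lam (int n) powr \<alpha> * t m * t n
        / (lam (int m) - lam (int n))\<^sup>2 \<le> t m * t n"
      by (simp add: divide_le_eq mult_ac)
  qed
  also have "\<dots> \<le> (real N - 1) * (\<Sum>n\<in>{1..N}. (t n)\<^sup>2)"
    using sum_off_diagonal_mult_le[of "{1..N}" t] by simp
  finally show ?thesis .
qed

lemma hilbert_lhs_nonneg:
  assumes "\<forall>n\<in>{1..N}. 0 \<le> t n"
  shows "0 \<le> hilbert_lhs \<alpha> N lam t"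
  unfolding hilbert_lhs_def using assms by (intro sum_nonneg) auto

lemma hilbert_lhs_fun_upd_Suc:
  "hilbert_lhs \<alpha> (Suc N) lam (t(Suc N := 0)) = hilbert_lhs \<alpha> N lam t"
proof -
  define f where "f t m n = gap lam (int m) powr (2 - \<alpha>) * gap lam (int n) powr \<alpha> * t m * t n
      / (lam (int m) - lam (int n))\<^sup>2" for t :: "nat \<Rightarrow> real" and m n
  let ?t = "t(Suc N := 0)"
  have row: "(\<Sum>n\<in>{1..Suc N} - {m}. f ?t m n) = (\<Sum>n\<in>{1..N} - {m}. f t m n)"
    if "m \<in> {1..N}" for m
  proof -
    have "{1..Suc N} - {m} = insert (Suc N) ({1..N} - {m})" using that by auto
    then show ?thesis using that by (simp add: f_def)
  qed
  have "{1..Suc N} = insert (Suc N) {1..N}" by auto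
  then have "(\<Sum>m\<in>{1..Suc N}. \<Sum>n\<in>{1..Suc N} - {m}. f ?t m n)
      = (\<Sum>m\<in>{1..N}. \<Sum>n\<in>{1..Suc N} - {m}. f ?t m n)"
    by (simp add: f_def)
  also have "\<dots> = (\<Sum>m\<in>{1..N}. \<Sum>n\<in>{1..N} - {m}. f t m n)"
    using row by simp
  finally show ?thesis unfolding hilbert_lhs_def f_def .
qed

lemma hilbert_lhs_two_of_int: "hilbert_lhs \<alpha> 2 real_of_int (\<lambda>_. 1) = 2"
proof -
  have "{1..2::nat} = {1, 2}" by auto
  then show ?thesis by (simp add: hilbert_lhs_def gap_def insert_Diff_if)
qed

lemma strict_mono_of_int: "strict_mono real_of_int"
  by (simp add: strict_mono_def)

lemma admissible_constD:
  assumes "admissible_const \<alpha> N C" and "strict_mono lam" and "\<forall>n\<in>{1..N}. 0 \<le> t n"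
  shows "hilbert_lhs \<alpha> N lam t \<le> C * (\<Sum>n\<in>{1..N}. (t n)\<^sup>2)"
  using assms unfolding admissible_const_def by blast

lemma admissible_const_nonneg:
  assumes "1 \<le> N" and "admissible_const \<alpha> N C"
  shows "0 \<le> C"
proof -
  define t :: "nat \<Rightarrow> real" where "t k = (if k = 1 then 1 else 0)" for k
  have t: "\<forall>n\<in>{1..N}. 0 \<le> t n" by (simp add: t_def)
  have "(t n)\<^sup>2 = (if n = 1 then 1 else 0)" for n by (simp add: t_def)
  then have "(\<Sum>n\<in>{1..N}. (t n)\<^sup>2) = 1" using \<open>1 \<le> N\<close> by simp
  moreover have "0 \<le> hilbert_lhs \<alpha> N real_of_int t" using t by (rule hilbert_lhs_nonneg)
  ultimately show ?thesis
    using admissible_constD[OF assms(2) strict_mono_of_int t] by simp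
qed

lemma admissible_const_two_ge_one:
  assumes "admissible_const \<alpha> 2 C"
  shows "1 \<le> C"
  using admissible_constD[OF assms strict_mono_of_int, of "\<lambda>_. 1"]
  by (simp add: hilbert_lhs_two_of_int)

lemma admissible_const_mono:
  assumes "admissible_const \<alpha> N C" and "C \<le> C'"
  shows "admissible_const \<alpha> N C'"
  unfolding admissible_const_def
proof (intro allI impI)
  fix lam :: "int \<Rightarrow> real" and t :: "nat \<Rightarrow> real"
  assume "strict_mono lam" and "\<forall>n\<in>{1..N}. 0 \<le> t n"
  then have "hilbert_lhs \<alpha> N lam t \<le> C * (\<Sum>n\<in>{1..N}. (t n)\<^sup>2)"
    by (rule admissible_constD[OF assms(1)])
  also have "\<dots> \<le> C' * (\<Sum>n\<in>{1..N}. (t n)\<^sup>2)"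
    using \<open>C \<le> C'\<close> by (intro mult_right_mono) (simp_all add: sum_nonneg)
  finally show "hilbert_lhs \<alpha> N lam t \<le> C' * (\<Sum>n\<in>{1..N}. (t n)\<^sup>2)" .
qed

lemma admissible_const_Suc_imp:
  assumes "admissible_const \<alpha> (Suc N) C"
  shows "admissible_const \<alpha> N C"
  unfolding admissible_const_def
proof (intro allI impI)
  fix lam :: "int \<Rightarrow> real" and t :: "nat \<Rightarrow> real"
  assume lam: "strict_mono lam" and t: "\<forall>n\<in>{1..N}. 0 \<le> t n"
  let ?t = "t(Suc N := 0)"
  have "{1..Suc N} = insert (Suc N) {1..N}" by auto
  then have "(\<Sum>n\<in>{1..Suc N}. (?t n)\<^sup>2) = (\<Sum>n\<in>{1..N}. (t n)\<^sup>2)"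
    by simp
  moreover have "\<forall>n\<in>{1..Suc N}. 0 \<le> ?t n" using t by simp
  ultimately show "hilbert_lhs \<alpha> N lam t \<le> C * (\<Sum>n\<in>{1..N}. (t n)\<^sup>2)"
    using admissible_constD[OF assms lam, of ?t] by (simp add: hilbert_lhs_fun_upd_Suc)
qed

lemma Inf_ereal_upper_bounds:
  fixes f :: "'a \<Rightarrow> real"
  shows "Inf (ereal ` {C. \<forall>i\<in>I. f i \<le> C}) = (SUP i\<in>I. ereal (f i))"
proof (rule antisym)
  show "(SUP i\<in>I. ereal (f i)) \<le> Inf (ereal ` {C. \<forall>i\<in>I. f i \<le> C})"
    by (auto intro!: Inf_greatest SUP_least)
next
  show "Inf (ereal ` {C. \<forall>i\<in>I. f i \<le> C}) \<le> (SUP i\<in>I. ereal (f i))"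
  proof (cases "SUP i\<in>I. ereal (f i)")
    case (real s)
    then have "\<forall>i\<in>I. f i \<le> s"
      using SUP_upper[of _ I "\<lambda>i. ereal (f i)"] by fastforce
    then show ?thesis using real by (auto intro: Inf_lower)
  next
    case MInf
    then have "I = {}"
      using SUP_upper[of _ I "\<lambda>i. ereal (f i)"] by fastforce
    then have "{C. \<forall>i\<in>I. f i \<le> C} = UNIV" by simp
    moreover have "Inf (range ereal) = -\<infinity>"
      by (meson Inf_lower2 ereal_bot less_eq_ereal_def rangeI)
    ultimately show ?thesis using MInf by (simp only: order_refl)
  qed simp
qed

context
  fixes \<alpha> :: real
  assumes \<alpha>: "0 \<le> \<alpha>" "\<alpha> \<le> 2"
begin

lemma admissible_const_card: "admissible_const \<alpha> N (real N - 1)"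
  unfolding admissible_const_def using hilbert_lhs_le_card \<alpha> by blast

lemma admissible_const_Cbar:
  assumes "1 \<le> N"
  shows "admissible_const \<alpha> N (Cbar \<alpha> N)"
  unfolding admissible_const_def
proof (intro allI impI)
  fix lam :: "int \<Rightarrow> real" and t :: "nat \<Rightarrow> real"
  assume lam: "strict_mono lam" and t: "\<forall>n\<in>{1..N}. 0 \<le> t n"
  define S where "S = (\<Sum>n\<in>{1..N}. (t n)\<^sup>2)"
  have bound: "hilbert_lhs \<alpha> N lam t \<le> C * S" if "admissible_const \<alpha> N C" for C
    using admissible_constD[OF that lam t] by (simp add: S_def)
  consider "S = 0" | "0 < S" using sum_nonneg[of "{1..N}" "\<lambda>n. (t n)\<^sup>2"] S_def by force
  then show "hilbert_lhs \<alpha> N lam t \<le> Cbar \<alpha> N * (\<Sum>n\<in>{1..N}. (t n)\<^sup>2)"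
  proof cases
    case 1
    then show ?thesis using bound[OF admissible_const_card] S_def by simp
  next
    case 2
    have "hilbert_lhs \<alpha> N lam t / S \<le> Cbar \<alpha> N"
      unfolding Cbar_def using admissible_const_card bound \<open>0 < S\<close>
      by (intro cInf_greatest) (auto simp: divide_le_eq)
    then show ?thesis using \<open>0 < S\<close> by (simp add: S_def divide_le_eq)
  qed
qed

lemma admissible_const_iff_Cbar_le:
  assumes "1 \<le> N"
  shows "admissible_const \<alpha> N C \<longleftrightarrow> Cbar \<alpha> N \<le> C"
proof
  assume "admissible_const \<alpha> N C"
  moreover have "bdd_below {C. admissible_const \<alpha> N C}"
    using admissible_const_nonneg[OF assms] by (auto simp: bdd_below_def)
  ultimately show "Cbar \<alpha> N \<le> C" unfolding Cbar_def by (simp add: cInf_lower)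
next
  assume "Cbar \<alpha> N \<le> C"
  then show "admissible_const \<alpha> N C"
    using admissible_const_mono admissible_const_Cbar[OF assms] by blast
qed

lemma Cbar_nonneg: "1 \<le> N \<Longrightarrow> 0 \<le> Cbar \<alpha> N"
  using admissible_const_nonneg admissible_const_Cbar by blast

lemma Cbar_le_card: "1 \<le> N \<Longrightarrow> Cbar \<alpha> N \<le> real N - 1"
  using admissible_const_iff_Cbar_le admissible_const_card by blast

lemma Cbar_mono_Suc:
  assumes "1 \<le> N"
  shows "Cbar \<alpha> N \<le> Cbar \<alpha> (Suc N)"
  using admissible_const_Suc_imp[OF admissible_const_Cbar[of "Suc N"]]
  by (simp add: admissible_const_iff_Cbar_le[OF assms])

lemma Cbar_two: "Cbar \<alpha> 2 = 1"
  using Cbar_le_card[of 2] admissible_const_two_ge_one[OF admissible_const_Cbar[of 2]] by simp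

lemma Cbar_inf_eq_SUP: "Cbar_inf \<alpha> = (SUP N. ereal (Cbar \<alpha> (Suc N)))"
proof -
  have "{C. \<forall>N\<ge>1. admissible_const \<alpha> N C} = {C. \<forall>N\<in>UNIV. Cbar \<alpha> (Suc N) \<le> C}"
    using admissible_const_iff_Cbar_le by (auto dest!: Suc_le_D)
  then show ?thesis unfolding Cbar_inf_def by (simp only: Inf_ereal_upper_bounds)
qed

text \<open>Every constant is admissible for \<open>N = 0\<close>, so \<open>Cbar \<alpha> 0\<close> is the junk value
  \<open>Inf UNIV\<close>; monotonicity only holds from \<open>N = 1\<close> on, hence the shift by one.\<close>

lemma LIMSEQ_Cbar: "(\<lambda>N. ereal (Cbar \<alpha> N)) \<longlonglongrightarrow> Cbar_inf \<alpha>"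
proof (rule LIMSEQ_imp_Suc)
  have "incseq (\<lambda>N. ereal (Cbar \<alpha> (Suc N)))"
    using Cbar_mono_Suc by (intro incseq_SucI) simp
  then show "(\<lambda>N. ereal (Cbar \<alpha> (Suc N))) \<longlonglongrightarrow> Cbar_inf \<alpha>"
    unfolding Cbar_inf_eq_SUP by (rule LIMSEQ_SUP)
qed

end

theorem proposition2:
  fixes \<alpha> :: real
  assumes "0 \<le> \<alpha>" and "\<alpha> \<le> 2"
  shows "Cbar \<alpha> 1 = 0 \<and> Cbar \<alpha> 2 = 1
    \<and> (\<forall>N\<ge>1. Cbar \<alpha> N \<le> Cbar \<alpha> (N + 1))
    \<and> (\<forall>N\<ge>1. 0 \<le> Cbar \<alpha> N \<and> Cbar \<alpha> N \<le> real N - 1)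
    \<and> ((\<lambda>N. ereal (Cbar \<alpha> N)) \<longlonglongrightarrow> Cbar_inf \<alpha>)"
proof -
  have bounds: "\<forall>N\<ge>1. 0 \<le> Cbar \<alpha> N \<and> Cbar \<alpha> N \<le> real N - 1"
    using Cbar_nonneg[OF assms] Cbar_le_card[OF assms] by blast
  then have "Cbar \<alpha> 1 = 0" by force
  moreover have "\<forall>N\<ge>1. Cbar \<alpha> N \<le> Cbar \<alpha> (N + 1)"
    using Cbar_mono_Suc[OF assms] by simp
  ultimately show ?thesis
    using bounds Cbar_two[OF assms] LIMSEQ_Cbar[OF assms] by blast
qed

end
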